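(* If a finite set $S\subset\mathbb{R}^3$ minimally surrounds the origin in $\mathbb{R}^3$, then either (i) $S$ is a critical tetrahedron, or (ii) $S$ is the union of two critical triangles sharing exactly one point, or (iii) $S$ is the disjoint union of a critical triangle and a critical segment, or (iv) $S$ consists of three disjoint critical segments.
   Context: A point set in $\mathbb{R}^d$ surrounds the origin if the origin lies in the interior of its convex hull; it minimally surrounds the origin if it surrounds the origin but no proper subset does. A point set $S$ surrounds the origin in a linear subspace $E$ if $S$ spans $E$ and the origin lies in the relative interior of $\mathrm{conv}(S)$. A $k$-simplex is a set of $k+1$ affinely independent points (segment, triangle, tetrahedron for $k=1,2,3$); a simplex $N$ is critical if it surrounds the origin in its linear hull. *)

theory Defs
  imports "HOL-Analysis.Analysis"
begin

definition surrounds :: "'a::euclidean_space set \<Rightarrow> bool" where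
  "surrounds S \<longleftrightarrow> 0 \<in> interior (convex hull S)"

definition minimally_surrounds :: "'a::euclidean_space set \<Rightarrow> bool" where
  "minimally_surrounds S \<longleftrightarrow> surrounds S \<and> (\<forall>T. T \<subset> S \<longrightarrow> \<not> surrounds T)"

definition surrounds_in :: "'a::euclidean_space set \<Rightarrow> 'a set \<Rightarrow> bool" where
  "surrounds_in S E \<longleftrightarrow> subspace E \<and> span S = E \<and> 0 \<in> rel_interior (convex hull S)"

definition is_simplex :: "nat \<Rightarrow> 'a::euclidean_space set \<Rightarrow> bool" where
  "is_simplex k N \<longleftrightarrow> finite N \<and> card N = k + 1 \<and> \<not> affine_dependent N"

definition critical_simplex :: "nat \<Rightarrow> 'a::euclidean_space set \<Rightarrow> bool" where
  "critical_simplex k N \<longleftrightarrow> is_simplex k N \<and> surrounds_in N (span N)"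

end

theory Submission
  imports Defs
begin

text \<open>For a finite set, surrounding the origin means spanning the space and being positively
  dependent, i.e. having \<open>0\<close> as a combination with strictly positive coefficients; critical
  simplices are the affinely independent positively dependent sets. Shifting a positive relation
  along an affine dependence shows that every point of a positively dependent set lies in an
  affinely independent positively dependent subset, a circuit, which in dimension 3 has two to four
  points. A circuit with four points spans, so by minimality it is all of \<open>S\<close>. For a triangle
  circuit \<open>V\<close>, take points \<open>a\<close>, \<open>b\<close> of \<open>S\<close> strictly on either side of its plane: a
  positive combination \<open>z\<close> of \<open>a\<close> and \<open>b\<close> lies in the plane and \<open>-z\<close> is a positive
  combination of \<open>V\<close>, so \<open>S = V \<union> {a, b}\<close>. Shifting that combination until a vertex drops
  out writes \<open>-z\<close> positively in at most two vertices: none gives the segment \<open>{a, b}\<close>, one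
  vertex \<open>m\<close> the triangle \<open>{a, b, m}\<close>, and two would give a smaller surrounding set. If no
  circuit has three or four points, every point of \<open>S\<close> has an opposite point in \<open>S\<close>, and the
  three segments through a basis contained in \<open>S\<close> already surround the origin.\<close>

lemma subset_doubleton_cases:
  assumes "W \<subseteq> {x, y}"
  obtains "W = {}" | m where "W = {m}" | "W = {x, y}"
proof (cases "x \<in> W"; cases "y \<in> W")
  assume "x \<in> W" "y \<in> W"
  then have "W = {x, y}" using assms by blast
  then show thesis by (rule that(3))
next
  assume "x \<in> W" "y \<notin> W"
  then have "W = {x}" using assms by blast
  then show thesis by (rule that(2))
next
  assume "x \<notin> W" "y \<in> W"
  then have "W = {y}" using assms by blast
  then show thesis by (rule that(2))
next
  assume "x \<notin> W" "y \<notin> W"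
  then have "W = {}" using assms by blast
  then show thesis by (rule that(1))
qed

lemma card_2_obtain_other:
  assumes "card A = 2" "a \<in> A"
  obtains b where "A = {a, b}" "a \<noteq> b"
proof -
  have "finite A" using assms(1) card.infinite by fastforce
  then have "card (A - {a}) = 1" using assms by simp
  then obtain b where b: "A - {a} = {b}" by (rule card_1_singletonE)
  then have "A = {a, b}" using assms(2) by blast
  moreover have "a \<noteq> b" using b by blast
  ultimately show thesis by (rule that)
qed

lemma sum_scaleR_add_mult:
  fixes V :: "'a::real_vector set"
  shows "(\<Sum>x\<in>V. (a x + t * b x) *\<^sub>R x) = (\<Sum>x\<in>V. a x *\<^sub>R x) + t *\<^sub>R (\<Sum>x\<in>V. b x *\<^sub>R x)"
  unfolding scaleR_add_left sum.distrib scaleR_sum_right by simp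

lemma weighted_sum_zero_exists_pos:
  fixes c f :: "'a \<Rightarrow> real"
  assumes "finite S" "\<forall>x\<in>S. 0 < c x" "(\<Sum>x\<in>S. c x * f x) = 0" "\<exists>x\<in>S. f x \<noteq> 0"
  shows "\<exists>x\<in>S. 0 < f x"
proof (rule ccontr)
  assume "\<not> ?thesis"
  then have nonpos: "c x * f x \<le> 0" if "x \<in> S" for x
    using assms(2) that by (simp add: mult_nonneg_nonpos less_imp_le not_less)
  have "(\<Sum>x\<in>S. - (c x * f x)) = 0"
    using assms(3) by (simp add: sum_negf)
  then have "\<forall>x\<in>S. c x * f x = 0"
    using sum_nonneg_eq_0_iff[OF assms(1), of "\<lambda>x. - (c x * f x)"] nonpos by simp
  then show False using assms(2,4) by force
qed

lemma shift_until_vanishing: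
  fixes c d :: "'a \<Rightarrow> real"
  assumes "finite V" "\<forall>x\<in>V. 0 < c x" "\<exists>x\<in>V. d x < 0"
  obtains t x0 where "0 \<le> t" "x0 \<in> V" "c x0 + t * d x0 = 0" "\<forall>x\<in>V. 0 \<le> c x + t * d x"
proof -
  define N where "N = {x\<in>V. d x < 0}"
  have N: "finite N" "N \<noteq> {}" using assms(1,3) by (auto simp: N_def)
  define t where "t = Min ((\<lambda>x. c x / - d x) ` N)"
  have "t \<in> (\<lambda>x. c x / - d x) ` N" unfolding t_def using N by (intro Min_in) auto
  then obtain x0 where x0: "x0 \<in> N" "t = c x0 / - d x0" by blast
  have "0 \<le> t" using x0 assms(2) by (auto simp: N_def) (meson divide_pos_neg less_imp_le)
  moreover have "c x0 + t * d x0 = 0" using x0 by (auto simp: N_def)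
  moreover have "\<forall>x\<in>V. 0 \<le> c x + t * d x"
  proof
    fix x assume x: "x \<in> V"
    show "0 \<le> c x + t * d x"
    proof (cases "d x < 0")
      case True
      then have "t \<le> c x / - d x" using N x unfolding t_def by (intro Min_le) (auto simp: N_def)
      then have "t * - d x \<le> c x" using True by (subst (asm) pos_le_divide_eq) auto
      then show ?thesis by (simp add: algebra_simps)
    next
      case False
      then show ?thesis using \<open>0 \<le> t\<close> assms(2) x by (simp add: add_nonneg_nonneg less_imp_le)
    qed
  qed
  moreover have "x0 \<in> V" using x0(1) by (simp add: N_def)
  ultimately show ?thesis by (intro that[of t x0])
qed

definition pos_combination :: "'a::real_vector set \<Rightarrow> 'a \<Rightarrow> bool" where
  "pos_combination U y \<longleftrightarrow> (\<exists>c. (\<forall>x\<in>U. 0 < c x) \<and> (\<Sum>x\<in>U. c x *\<^sub>R x) = y)"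

abbreviation pos_dependent :: "'a::real_vector set \<Rightarrow> bool" where
  "pos_dependent U \<equiv> pos_combination U 0"

lemma pos_combination_empty [simp]: "pos_combination {} y \<longleftrightarrow> y = 0"
  by (auto simp: pos_combination_def)

lemma pos_combination_singleton: "pos_combination {x} y \<longleftrightarrow> (\<exists>c>0. y = c *\<^sub>R x)"
  by (auto simp: pos_combination_def)

lemma pos_combination_singletonI: "0 < c \<Longrightarrow> pos_combination {x} (c *\<^sub>R x)"
  by (auto simp: pos_combination_singleton)

lemma pos_combination_Un:
  assumes "finite A" "finite B" "A \<inter> B = {}" "pos_combination A y" "pos_combination B z"
  shows "pos_combination (A \<union> B) (y + z)"
proof -
  obtain ca cb where ca: "\<forall>x\<in>A. 0 < ca x" "(\<Sum>x\<in>A. ca x *\<^sub>R x) = y"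
    and cb: "\<forall>x\<in>B. 0 < cb x" "(\<Sum>x\<in>B. cb x *\<^sub>R x) = z"
    using assms(4,5) unfolding pos_combination_def by blast
  define c where "c x = (if x \<in> A then ca x else cb x)" for x
  have "(\<Sum>x\<in>A \<union> B. c x *\<^sub>R x) = (\<Sum>x\<in>A. c x *\<^sub>R x) + (\<Sum>x\<in>B. c x *\<^sub>R x)"
    using assms(1-3) by (simp add: sum.union_disjoint)
  also have "(\<Sum>x\<in>A. c x *\<^sub>R x) = y"
    unfolding ca(2)[symmetric] by (rule sum.cong) (auto simp: c_def)
  also have "(\<Sum>x\<in>B. c x *\<^sub>R x) = z"
    unfolding cb(2)[symmetric] using assms(3) by (intro sum.cong) (auto simp: c_def)
  finally have "(\<Sum>x\<in>A \<union> B. c x *\<^sub>R x) = y + z" .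
  moreover have "\<forall>x\<in>A \<union> B. 0 < c x" using ca(1) cb(1) by (auto simp: c_def)
  ultimately show ?thesis unfolding pos_combination_def by blast
qed

lemma pos_combination_insert:
  assumes "finite U" "a \<notin> U" "0 < \<alpha>" "pos_combination U y"
  shows "pos_combination (insert a U) (\<alpha> *\<^sub>R a + y)"
  using pos_combination_Un[OF _ assms(1) _ pos_combination_singletonI[OF assms(3)] assms(4)] assms(2)
  by simp

lemma pos_combination_support:
  assumes "finite V" "\<forall>x\<in>V. 0 \<le> c x"
  shows "pos_combination {x\<in>V. 0 < c x} (\<Sum>x\<in>V. c x *\<^sub>R x)"
proof -
  have "(\<Sum>x\<in>{x\<in>V. 0 < c x}. c x *\<^sub>R x) = (\<Sum>x\<in>V. c x *\<^sub>R x)"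
    using assms by (intro sum.mono_neutral_left) force+
  then show ?thesis unfolding pos_combination_def by force
qed

lemma pos_combination_of_span:
  fixes V :: "'a::real_vector set"
  assumes "finite V" "pos_dependent V" "y \<in> span V"
  shows "pos_combination V y"
proof -
  obtain c where c: "\<forall>x\<in>V. 0 < c x" "(\<Sum>x\<in>V. c x *\<^sub>R x) = 0"
    using assms(2) unfolding pos_combination_def by blast
  obtain u where u: "(\<Sum>x\<in>V. u x *\<^sub>R x) = y"
    using assms(3) span_finite[OF assms(1)] by auto
  text \<open>Adding a large multiple of the relation \<open>c\<close> makes all coefficients positive.\<close>
  define M where "M = (\<Sum>x\<in>V. \<bar>u x\<bar> / c x) + 1"
  have "0 < u x + M * c x" if x: "x \<in> V" for x
  proof -
    have cx: "0 < c x" using c(1) x by blast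
    have "\<bar>u x\<bar> / c x \<le> (\<Sum>x\<in>V. \<bar>u x\<bar> / c x)"
      using assms(1) x c(1) by (intro member_le_sum) auto
    then have "(\<bar>u x\<bar> / c x + 1) * c x \<le> M * c x"
      using c(1) x by (intro mult_right_mono) (auto simp: M_def)
    moreover have "(\<bar>u x\<bar> / c x + 1) * c x = \<bar>u x\<bar> + c x" using cx by (simp add: distrib_right)
    ultimately have "\<bar>u x\<bar> + c x \<le> M * c x" by simp
    then show ?thesis using cx abs_ge_minus_self[of "u x"] by linarith
  qed
  moreover have "(\<Sum>x\<in>V. (u x + M * c x) *\<^sub>R x) = y"
    using u c(2) by (simp add: sum_scaleR_add_mult)
  ultimately show ?thesis
    unfolding pos_combination_def by (intro exI[of _ "\<lambda>x. u x + M * c x"]) blast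
qed

lemma pos_combination_avoid_point:
  fixes V :: "'a::real_vector set"
  assumes "finite V" "V \<noteq> {}" "pos_dependent V" "pos_combination V y"
  obtains x0 W where "x0 \<in> V" "W \<subseteq> V - {x0}" "pos_combination W y"
proof -
  obtain c where c: "\<forall>x\<in>V. 0 < c x" "(\<Sum>x\<in>V. c x *\<^sub>R x) = 0"
    using assms(3) unfolding pos_combination_def by blast
  obtain e where e: "\<forall>x\<in>V. 0 < e x" "(\<Sum>x\<in>V. e x *\<^sub>R x) = y"
    using assms(4) unfolding pos_combination_def by blast
  have "\<exists>x\<in>V. - c x < 0" using assms(2) c(1) by fastforce
  then obtain t x0 where t: "0 \<le> t" "x0 \<in> V" "e x0 + t * - c x0 = 0" "\<forall>x\<in>V. 0 \<le> e x + t * - c x"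
    by (rule shift_until_vanishing[OF assms(1) e(1)])
  have "(\<Sum>x\<in>V. (e x + t * - c x) *\<^sub>R x) = y"
    using e(2) c(2) by (simp only: sum_scaleR_add_mult) (simp add: sum_negf)
  then have "pos_combination {x\<in>V. 0 < e x + t * - c x} y"
    using pos_combination_support[OF assms(1) t(4)] by simp
  moreover have "{x\<in>V. 0 < e x + t * - c x} \<subseteq> V - {x0}" using t(3) by auto
  ultimately show ?thesis by (intro that[OF t(2)])
qed

lemma pos_dependent_psubset_of_affine_dependent:
  fixes U :: "'a::real_vector set"
  assumes "finite U" "pos_dependent U" "s \<in> U" "affine_dependent U"
  obtains U' where "U' \<subset> U" "s \<in> U'" "pos_dependent U'"
proof -
  obtain c where c: "\<forall>x\<in>U. 0 < c x" "(\<Sum>x\<in>U. c x *\<^sub>R x) = 0"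
    using assms(2) unfolding pos_combination_def by blast
  obtain d0 where d0: "sum d0 U = 0" "\<exists>v\<in>U. d0 v \<noteq> 0" "(\<Sum>v\<in>U. d0 v *\<^sub>R v) = 0"
    using assms(4) unfolding affine_dependent_explicit_finite[OF assms(1)] by blast
  text \<open>Orient the relation so that \<open>s\<close> keeps a positive coefficient.\<close>
  define d where "d = (if 0 \<le> d0 s then d0 else (\<lambda>x. - d0 x))"
  have d: "sum d U = 0" "\<exists>v\<in>U. d v \<noteq> 0" "(\<Sum>v\<in>U. d v *\<^sub>R v) = 0" "0 \<le> d s"
    using d0 by (auto simp: d_def sum_negf)
  have "\<exists>x\<in>U. 0 < - d x"
    using weighted_sum_zero_exists_pos[OF assms(1), of "\<lambda>_. 1" "\<lambda>x. - d x"] d(1,2)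
    by (simp add: sum_negf)
  then have "\<exists>x\<in>U. d x < 0" by simp
  then obtain t x0 where t: "0 \<le> t" "x0 \<in> U" "c x0 + t * d x0 = 0" "\<forall>x\<in>U. 0 \<le> c x + t * d x"
    by (rule shift_until_vanishing[OF assms(1) c(1)])
  define U' where "U' = {x\<in>U. 0 < c x + t * d x}"
  have "(\<Sum>x\<in>U. (c x + t * d x) *\<^sub>R x) = 0"
    using c(2) d(3) by (simp add: sum_scaleR_add_mult)
  then have "pos_dependent U'"
    using pos_combination_support[OF assms(1) t(4)] by (simp add: U'_def)
  moreover have "U' \<subset> U"
  proof -
    have "x0 \<notin> U'" using t(3) by (simp add: U'_def)
    then show ?thesis using t(2) by (auto simp: U'_def)
  qed
  moreover have "s \<in> U'" using assms(3) c(1) d(4) t(1) by (simp add: U'_def add_pos_nonneg)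
  ultimately show ?thesis by (intro that)
qed

lemma pos_dependent_obtain_circuit:
  fixes S :: "'a::real_vector set"
  assumes "finite S" "pos_dependent S" "s \<in> S"
  shows "\<exists>V\<subseteq>S. s \<in> V \<and> pos_dependent V \<and> \<not> affine_dependent V"
  using assms
proof (induction S rule: finite_psubset_induct)
  case (psubset S)
  show ?case
  proof (cases "affine_dependent S")
    case True
    then obtain U where U: "U \<subset> S" "s \<in> U" "pos_dependent U"
      using pos_dependent_psubset_of_affine_dependent[OF psubset.hyps psubset.prems(1,2)] by blast
    then obtain V where "V \<subseteq> U" "s \<in> V" "pos_dependent V" "\<not> affine_dependent V"
      using psubset.IH[of U] by blast
    then show ?thesis using U(1) by blast
  qed (use psubset.prems in blast)
qed

lemma pos_dependent_in_span_remove: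
  fixes V :: "'a::real_vector set"
  assumes "finite V" "pos_dependent V" "v \<in> V"
  shows "v \<in> span (V - {v})"
proof -
  obtain c where c: "\<forall>x\<in>V. 0 < c x" "(\<Sum>x\<in>V. c x *\<^sub>R x) = 0"
    using assms(2) unfolding pos_combination_def by blast
  have eq: "c v *\<^sub>R v = - (\<Sum>x\<in>V - {v}. c x *\<^sub>R x)"
    using c(2) assms(1,3) by (simp add: sum.remove eq_neg_iff_add_eq_0)
  have "0 < c v" using c(1) assms(3) by blast
  then have "v = (1 / c v) *\<^sub>R (c v *\<^sub>R v)" by simp
  also have "\<dots> = (1 / c v) *\<^sub>R - (\<Sum>x\<in>V - {v}. c x *\<^sub>R x)" by (simp only: eq)
  also have "\<dots> \<in> span (V - {v})"
    by (intro span_mul span_neg span_sum span_base) auto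
  finally show ?thesis .
qed

lemma pos_dependent_span_remove:
  fixes V :: "'a::real_vector set"
  assumes "finite V" "pos_dependent V" "v \<in> V"
  shows "span (V - {v}) = span V"
  using span_redundant[OF pos_dependent_in_span_remove[OF assms]] assms(3)
  by (simp add: insert_absorb)

lemma rel_interior_convex_hull_finite:
  fixes S :: "'a::euclidean_space set"
  assumes "finite S"
  shows "rel_interior (convex hull S) =
    {y. \<exists>u. (\<forall>x\<in>S. 0 < u x) \<and> sum u S = 1 \<and> (\<Sum>x\<in>S. u x *\<^sub>R x) = y}"
  using rel_interior_convex_hull_union[where S = "\<lambda>x. {x}" and I = S] assms by force

lemma zero_in_rel_interior_convex_hull_iff:
  fixes S :: "'a::euclidean_space set"
  assumes "finite S" "S \<noteq> {}"
  shows "0 \<in> rel_interior (convex hull S) \<longleftrightarrow> pos_dependent S"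
proof
  assume "0 \<in> rel_interior (convex hull S)"
  then show "pos_dependent S"
    unfolding rel_interior_convex_hull_finite[OF assms(1)] pos_combination_def by blast
next
  assume "pos_dependent S"
  then obtain c where c: "\<forall>x\<in>S. 0 < c x" "(\<Sum>x\<in>S. c x *\<^sub>R x) = 0"
    unfolding pos_combination_def by blast
  have "0 < sum c S" using assms c(1) by (intro sum_pos) auto
  moreover have "(\<Sum>x\<in>S. (c x / sum c S) *\<^sub>R x) = (1 / sum c S) *\<^sub>R (\<Sum>x\<in>S. c x *\<^sub>R x)"
    by (simp add: scaleR_sum_right)
  ultimately have "(\<forall>x\<in>S. 0 < c x / sum c S) \<and> (\<Sum>x\<in>S. c x / sum c S) = 1
      \<and> (\<Sum>x\<in>S. (c x / sum c S) *\<^sub>R x) = 0"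
    using c by (simp add: sum_divide_distrib[symmetric])
  then show "0 \<in> rel_interior (convex hull S)"
    unfolding rel_interior_convex_hull_finite[OF assms(1)] by (intro CollectI exI)
qed

lemma pos_dependent_doubleton_span:
  fixes b p :: "'a::real_vector"
  assumes "pos_dependent {b, p}"
  shows "p \<in> span {b}"
proof (cases "p = b")
  case False
  then have "p \<in> span ({b, p} - {p})" using assms by (intro pos_dependent_in_span_remove) auto
  then show ?thesis using False by (simp add: insert_Diff_if)
qed (simp add: span_base)

lemma pos_dependent_aff_dim:
  fixes V :: "'a::euclidean_space set"
  assumes "finite V" "V \<noteq> {}" "pos_dependent V"
  shows "aff_dim V = int (dim V)"
proof -
  have "0 \<in> rel_interior (convex hull V)"
    using zero_in_rel_interior_convex_hull_iff[OF assms(1,2)] assms(3) by blast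
  then have "0 \<in> affine hull V"
    using rel_interior_subset convex_hull_subset_affine_hull by blast
  then show ?thesis by (rule aff_dim_zero)
qed

lemma pos_dependent_affine_independent_iff:
  fixes V :: "'a::euclidean_space set"
  assumes "finite V" "V \<noteq> {}" "pos_dependent V"
  shows "\<not> affine_dependent V \<longleftrightarrow> dim V + 1 = card V"
  using pos_dependent_aff_dim[OF assms] assms(1) by (simp add: affine_independent_iff_card) linarith

lemma pos_dependent_affine_independentI:
  fixes V :: "'a::euclidean_space set"
  assumes "finite V" "pos_dependent V" "v \<in> V" "independent (V - {v})"
  shows "\<not> affine_dependent V"
proof -
  have "dim V = dim (span V)" by simp
  also have "\<dots> = dim (span (V - {v}))" by (simp only: pos_dependent_span_remove[OF assms(1-3)])
  also have "\<dots> = card (V - {v})" using dim_eq_card_independent[OF assms(4)] by simp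
  also have "\<dots> = card V - 1" using assms(1,3) by simp
  finally have "dim V = card V - 1" .
  moreover have "0 < card V" using assms(1,3) card_gt_0_iff by blast
  ultimately have "dim V + 1 = card V" by linarith
  moreover have "V \<noteq> {}" using assms(3) by blast
  ultimately show ?thesis using pos_dependent_affine_independent_iff[OF assms(1) _ assms(2)] by blast
qed

lemma surrounds_iff:
  fixes S :: "'a::euclidean_space set"
  assumes "finite S"
  shows "surrounds S \<longleftrightarrow> span S = UNIV \<and> pos_dependent S"
proof
  assume "surrounds S"
  then have int: "0 \<in> interior (convex hull S)" unfolding surrounds_def .
  then have "affine hull S = UNIV"
    using affine_hull_nonempty_interior[of "convex hull S"] by auto
  then have "span S = UNIV" using affine_hull_subset_span[of S] by auto
  moreover have "0 \<in> rel_interior (convex hull S)"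
    using int interior_subset_rel_interior by blast
  moreover have "S \<noteq> {}" using \<open>span S = UNIV\<close> by auto
  ultimately show "span S = UNIV \<and> pos_dependent S"
    using zero_in_rel_interior_convex_hull_iff[OF assms] by auto
next
  assume S: "span S = UNIV \<and> pos_dependent S"
  then have "S \<noteq> {}" by auto
  then have rel: "0 \<in> rel_interior (convex hull S)"
    using zero_in_rel_interior_convex_hull_iff[OF assms] S by blast
  then have "0 \<in> affine hull S"
    using rel_interior_subset convex_hull_subset_affine_hull by blast
  then have "affine hull (convex hull S) = UNIV"
    using S by (simp add: affine_hull_span_0)
  then show "surrounds S"
    unfolding surrounds_def using rel rel_interior_interior by blast
qed

lemma critical_simplex_iff:
  "critical_simplex k N \<longleftrightarrow>
    finite N \<and> card N = k + 1 \<and> \<not> affine_dependent N \<and> pos_dependent N"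
proof -
  have "N \<noteq> {}" if "card N = k + 1" using that by auto
  then show ?thesis
    using zero_in_rel_interior_convex_hull_iff[of N]
    unfolding critical_simplex_def is_simplex_def surrounds_in_def by auto
qed

lemma critical_segment_iff:
  "critical_simplex 1 V \<longleftrightarrow> card V = 2 \<and> pos_dependent V"
proof
  assume V: "card V = 2 \<and> pos_dependent V"
  then obtain x y where "V = {x, y}" by (auto simp: card_2_iff)
  then show "critical_simplex 1 V" using V by (simp add: critical_simplex_iff)
qed (simp add: critical_simplex_iff)

lemma critical_segment_subset_span:
  assumes "critical_simplex 1 P" "b \<in> P"
  shows "P \<subseteq> span {b}"
proof -
  have "card P = 2" "pos_dependent P" using assms(1) unfolding critical_segment_iff by auto
  obtain p where p: "P = {b, p}" by (rule card_2_obtain_other[OF \<open>card P = 2\<close> assms(2)])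
  then have "p \<in> span {b}" using pos_dependent_doubleton_span \<open>pos_dependent P\<close> by simp
  then show ?thesis using p span_base[of b "{b}"] by auto
qed

lemma critical_segmentI:
  fixes a b :: "'a::euclidean_space"
  assumes "a \<noteq> b" "0 < \<alpha>" "0 < \<beta>" "\<alpha> *\<^sub>R a + \<beta> *\<^sub>R b = 0"
  shows "critical_simplex 1 {a, b}"
proof -
  have "pos_combination (insert a {b}) (\<alpha> *\<^sub>R a + \<beta> *\<^sub>R b)"
    by (rule pos_combination_insert) (use assms in \<open>auto intro: pos_combination_singletonI\<close>)
  then have "pos_dependent {a, b}" using assms(4) by simp
  then show ?thesis using assms(1) by (simp add: critical_simplex_iff)
qed

lemma critical_triangleI:
  fixes a b m :: "'a::euclidean_space"
  assumes "m \<noteq> 0" "a \<notin> span {m}" "a \<noteq> b" "b \<noteq> m"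
    and "0 < \<alpha>" "0 < \<beta>" "0 < \<mu>" "\<alpha> *\<^sub>R a + \<beta> *\<^sub>R b + \<mu> *\<^sub>R m = 0"
  shows "critical_simplex 2 {a, b, m}"
proof -
  have "a \<noteq> m" using assms(2) span_base[of m "{m}"] by auto
  have bm: "pos_combination (insert b {m}) (\<beta> *\<^sub>R b + \<mu> *\<^sub>R m)"
    by (rule pos_combination_insert) (use assms in \<open>auto intro: pos_combination_singletonI\<close>)
  have "pos_combination (insert a {b, m}) (\<alpha> *\<^sub>R a + (\<beta> *\<^sub>R b + \<mu> *\<^sub>R m))"
    using pos_combination_insert[OF _ _ assms(5) bm] assms(3) \<open>a \<noteq> m\<close> by simp
  then have pd: "pos_dependent {a, b, m}" using assms(8) by (simp add: add.assoc)
  have "independent {a, m}" using assms(1,2) by (simp add: independent_insert)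
  moreover have "{a, b, m} - {b} = {a, m}" using assms(3,4) by auto
  ultimately have "\<not> affine_dependent {a, b, m}"
    using pos_dependent_affine_independentI[OF _ pd, of b] by simp
  then show ?thesis
    using pd assms(3,4) \<open>a \<noteq> m\<close> by (simp add: critical_simplex_iff)
qed

lemma pos_dependent_opposite_sides:
  fixes S :: "'a::euclidean_space set"
  assumes "finite S" "pos_dependent S" "span S = UNIV" "w \<noteq> 0"
  obtains a b where "a \<in> S" "b \<in> S" "0 < w \<bullet> a" "w \<bullet> b < 0"
proof -
  obtain c where c: "\<forall>x\<in>S. 0 < c x" "(\<Sum>x\<in>S. c x *\<^sub>R x) = 0"
    using assms(2) unfolding pos_combination_def by blast
  have sum: "(\<Sum>x\<in>S. c x * (w \<bullet> x)) = 0"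
    using c(2) inner_sum_right[of w "\<lambda>x. c x *\<^sub>R x" S] by simp
  have off: "\<exists>x\<in>S. w \<bullet> x \<noteq> 0"
  proof (rule ccontr)
    assume "\<not> ?thesis"
    then have "span S \<subseteq> {x. w \<bullet> x = 0}"
      by (intro span_minimal) (auto simp: subspace_hyperplane)
    then have "w \<bullet> w = 0" using assms(3) by blast
    then show False using assms(4) by simp
  qed
  obtain a where "a \<in> S" "0 < w \<bullet> a"
    using weighted_sum_zero_exists_pos[OF assms(1) c(1) sum off] by blast
  moreover obtain b where "b \<in> S" "0 < - (w \<bullet> b)"
    using weighted_sum_zero_exists_pos[OF assms(1) c(1), of "\<lambda>x. - (w \<bullet> x)"] sum off
    by (auto simp: sum_negf)
  ultimately show ?thesis using that by simp
qed

lemma span_singleton_inter_independent: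
  fixes B :: "'a::real_vector set"
  assumes "independent B" "b \<in> B" "b' \<in> B" "b \<noteq> b'"
  shows "span {b} \<inter> span {b'} = {0}"
proof -
  have "x = 0" if x: "x \<in> span {b}" "x \<in> span {b'}" for x
  proof (rule ccontr)
    assume "x \<noteq> 0"
    obtain k where k: "x = k *\<^sub>R b" using x(1) by (auto simp: span_singleton)
    then have "k \<noteq> 0" using \<open>x \<noteq> 0\<close> by auto
    then have "b = (1 / k) *\<^sub>R x" using k by simp
    then have "b \<in> span {b'}" using x(2) by (simp add: span_mul)
    moreover have "span {b'} \<subseteq> span (B - {b})" using assms(3,4) by (intro span_mono) auto
    ultimately show False using assms(1,2) unfolding dependent_def by blast
  qed
  then show ?thesis using span_zero by blast
qed

lemma obtain_hyperplane_eq_span: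
  fixes V :: "'a::euclidean_space set"
  assumes "dim V + 1 = DIM('a)"
  obtains w where "w \<noteq> 0" "span V = {x. w \<bullet> x = 0}"
proof -
  obtain w where w: "w \<noteq> 0" "span V \<subseteq> {x. w \<bullet> x = 0}"
    using lowdim_subset_hyperplane[of V] assms by auto
  have "span V = {x. w \<bullet> x = 0}"
    using w assms dim_hyperplane[OF w(1)] by (intro subspace_dim_equal) (auto simp: subspace_hyperplane)
  with w(1) show ?thesis by (rule that)
qed

lemma minimally_surroundsD:
  fixes S :: "'a::euclidean_space set"
  assumes "finite S" "minimally_surrounds S"
  shows "span S = UNIV" "pos_dependent S"
  using assms surrounds_iff unfolding minimally_surrounds_def by auto

lemma minimally_surrounds_subset_eq:
  fixes S :: "'a::euclidean_space set"
  assumes "finite S" "minimally_surrounds S" "T \<subseteq> S" "span T = UNIV" "pos_dependent T"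
  shows "T = S"
proof (rule ccontr)
  assume "T \<noteq> S"
  then have "T \<subset> S" using assms(3) by blast
  moreover have "surrounds T"
    using surrounds_iff[of T] assms(1,3-5) finite_subset by blast
  ultimately show False using assms(2) unfolding minimally_surrounds_def by blast
qed

lemma minimally_surrounds_zero_notin:
  fixes S :: "'a::euclidean_space set"
  assumes "finite S" "minimally_surrounds S"
  shows "0 \<notin> S"
proof
  assume "0 \<in> S"
  note S = minimally_surroundsD[OF assms]
  obtain c where c: "\<forall>x\<in>S. 0 < c x" "(\<Sum>x\<in>S. c x *\<^sub>R x) = 0"
    using S(2) unfolding pos_combination_def by blast
  have "(\<Sum>x\<in>S - {0}. c x *\<^sub>R x) = 0"
    using c(2) assms(1) \<open>0 \<in> S\<close> by (simp add: sum.remove)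
  then have "pos_dependent (S - {0})"
    using c(1) unfolding pos_combination_def by (intro exI[of _ c]) auto
  moreover have "span (S - {0}) = UNIV"
    using S(1) span_redundant[OF span_zero, of "S - {0}"] \<open>0 \<in> S\<close> by (simp add: insert_absorb)
  ultimately have "S - {0} = S"
    using minimally_surrounds_subset_eq[OF assms] by blast
  then show False using \<open>0 \<in> S\<close> by blast
qed

lemma minimally_surrounds_obtain_circuit:
  fixes S :: "'a::euclidean_space set"
  assumes "finite S" "minimally_surrounds S" "s \<in> S"
  obtains V where "V \<subseteq> S" "s \<in> V" "pos_dependent V" "\<not> affine_dependent V"
    "2 \<le> card V" "card V \<le> DIM('a) + 1"
proof -
  obtain V where V: "V \<subseteq> S" "s \<in> V" "pos_dependent V" "\<not> affine_dependent V"
    using pos_dependent_obtain_circuit[OF assms(1) minimally_surroundsD(2)[OF assms(1,2)] assms(3)]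
    by blast
  have fin: "finite V" using V(1) assms(1) finite_subset by blast
  have "card V \<le> DIM('a) + 1"
    using affine_dependent_biggerset[OF fin] V(4) by fastforce
  moreover have "card V \<noteq> 1"
  proof
    assume "card V = 1"
    then have "V = {s}" using V(2) by (auto simp: card_1_singleton_iff)
    then have "s = 0" using V(3) by (auto simp: pos_combination_singleton)
    then show False using minimally_surrounds_zero_notin[OF assms(1,2)] assms(3) by blast
  qed
  moreover have "card V \<noteq> 0" using fin V(2) by auto
  ultimately show ?thesis using that V by simp
qed

lemma minimally_surrounds_full_circuit:
  fixes S :: "'a::euclidean_space set"
  assumes "finite S" "minimally_surrounds S"
    and "V \<subseteq> S" "pos_dependent V" "\<not> affine_dependent V" "card V = DIM('a) + 1"
  shows "V = S"
proof -
  have fin: "finite V" using assms(1,3) finite_subset by blast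
  have "V \<noteq> {}" using assms(6) by auto
  then have "dim V = DIM('a)"
    using pos_dependent_affine_independent_iff[OF fin _ assms(4)] assms(5,6) by simp
  then have "span V = UNIV" using dim_eq_full by blast
  then show ?thesis using minimally_surrounds_subset_eq[OF assms(1-3)] assms(4) by blast
qed

lemma minimally_surrounds_facet_circuit:
  fixes S :: "'a::euclidean_space set"
  assumes "finite S" "minimally_surrounds S"
    and V: "V \<subseteq> S" "pos_dependent V" "\<not> affine_dependent V" "card V = DIM('a)"
  obtains a b \<alpha> \<beta> where "a \<notin> span V" "b \<notin> span V" "a \<noteq> b" "0 < \<alpha>" "0 < \<beta>"
    "\<alpha> *\<^sub>R a + \<beta> *\<^sub>R b \<in> span V" "span (insert a V) = UNIV" "S = V \<union> {a, b}"
proof -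
  note S = minimally_surroundsD[OF assms(1,2)]
  have fin: "finite V" using V(1) assms(1) finite_subset by blast
  have "V \<noteq> {}" using V(4) by auto
  then have dV: "dim V + 1 = DIM('a)"
    using pos_dependent_affine_independent_iff[OF fin _ V(2)] V(3,4) by simp
  then obtain w where w: "w \<noteq> 0" and span_V: "span V = {x. w \<bullet> x = 0}"
    by (rule obtain_hyperplane_eq_span)
  obtain a b where ab: "a \<in> S" "b \<in> S" "0 < w \<bullet> a" "w \<bullet> b < 0"
    by (rule pos_dependent_opposite_sides[OF assms(1) S(2,1) w])
  define \<alpha> where "\<alpha> = - (w \<bullet> b)"
  define \<beta> where "\<beta> = w \<bullet> a"
  have out: "a \<notin> span V" "b \<notin> span V" "a \<noteq> b" using ab span_V by auto
  have pos: "0 < \<alpha>" "0 < \<beta>" using ab by (auto simp: \<alpha>_def \<beta>_def)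
  have cross: "\<alpha> *\<^sub>R a + \<beta> *\<^sub>R b \<in> span V"
    using span_V by (simp add: \<alpha>_def \<beta>_def inner_diff_right)
  have "dim (insert a V) = DIM('a)" using dV out(1) by (simp add: dim_insert)
  then have span_aV: "span (insert a V) = UNIV" using dim_eq_full by blast
  have "pos_combination V (- (\<alpha> *\<^sub>R a + \<beta> *\<^sub>R b))"
    using pos_combination_of_span[OF fin V(2) span_neg[OF cross]] .
  moreover have "pos_combination {a, b} (\<alpha> *\<^sub>R a + \<beta> *\<^sub>R b)"
    using pos_combination_insert[OF _ _ pos(1) pos_combination_singletonI[OF pos(2)]] out(3) by simp
  moreover have "V \<inter> {a, b} = {}" using out(1,2) span_base by blast
  ultimately have "pos_combination (V \<union> {a, b}) (- (\<alpha> *\<^sub>R a + \<beta> *\<^sub>R b) + (\<alpha> *\<^sub>R a + \<beta> *\<^sub>R b))"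
    by (intro pos_combination_Un[OF fin]) auto
  then have "pos_dependent (V \<union> {a, b})" by simp
  moreover have "span (V \<union> {a, b}) = UNIV"
    using span_aV span_mono[of "insert a V" "V \<union> {a, b}"] by auto
  moreover have "V \<union> {a, b} \<subseteq> S" using V(1) ab(1,2) by blast
  ultimately have "V \<union> {a, b} = S"
    by (intro minimally_surrounds_subset_eq[OF assms(1,2)])
  then have "S = V \<union> {a, b}" ..
  then show ?thesis by (rule that[OF out pos cross span_aV])
qed

lemma minimally_surrounds_relation_avoiding_vertex:
  fixes S :: "'a::euclidean_space set"
  assumes "finite S" "minimally_surrounds S"
    and "V \<subseteq> S" "pos_dependent V" "x0 \<in> V"
    and "A \<subseteq> S" "A \<inter> V = {}" "span (A \<union> V) = UNIV"
    and "pos_combination A z" "pos_combination (V - {x0}) (- z)"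
  shows False
proof -
  have fin: "finite V" "finite A" using assms(1,3,6) finite_subset by auto
  define T where "T = A \<union> (V - {x0})"
  have "pos_combination T (z + - z)"
    unfolding T_def using fin assms(7,9,10) by (intro pos_combination_Un) auto
  then have "pos_dependent T" by simp
  moreover have "span T = UNIV"
  proof -
    have "V \<subseteq> span T"
      using pos_dependent_span_remove[OF fin(1) assms(4,5)] span_superset span_mono[of "V - {x0}" T]
      by (auto simp: T_def)
    then have "A \<union> V \<subseteq> span T" using span_superset[of T] by (auto simp: T_def)
    then show ?thesis using assms(8) span_minimal[OF _ subspace_span] by blast
  qed
  moreover have "T \<subseteq> S" using assms(3,6) by (auto simp: T_def)
  ultimately have "T = S" by (intro minimally_surrounds_subset_eq[OF assms(1,2)])
  moreover have "x0 \<notin> T" using assms(5,7) by (auto simp: T_def)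
  ultimately show False using assms(3,5) by blast
qed

lemma minimally_surrounds_triangle_crossing:
  fixes S :: "(real^3) set"
  assumes "finite S" "minimally_surrounds S"
    and V: "V \<subseteq> S" "pos_dependent V" "card V = 3"
    and out: "a \<notin> span V" "b \<notin> span V" "a \<noteq> b" and pos: "0 < \<alpha>" "0 < \<beta>"
    and cross: "\<alpha> *\<^sub>R a + \<beta> *\<^sub>R b \<in> span V" and span_aV: "span (insert a V) = UNIV"
    and S_eq: "S = V \<union> {a, b}"
  obtains "\<alpha> *\<^sub>R a + \<beta> *\<^sub>R b = 0"
    | m \<mu> where "m \<in> V" "0 < \<mu>" "\<alpha> *\<^sub>R a + \<beta> *\<^sub>R b + \<mu> *\<^sub>R m = 0"
proof -
  have fin: "finite V" using V(1) assms(1) finite_subset by blast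
  have "V \<noteq> {}" using V(3) by auto
  have aV: "a \<notin> V" "b \<notin> V" using out(1,2) span_base by auto
  define z where "z = \<alpha> *\<^sub>R a + \<beta> *\<^sub>R b"
  obtain x0 W where W: "x0 \<in> V" "W \<subseteq> V - {x0}" "pos_combination W (- z)"
    using pos_combination_avoid_point[OF fin \<open>V \<noteq> {}\<close> V(2)]
      pos_combination_of_span[OF fin V(2) span_neg[OF cross]] unfolding z_def by blast
  obtain n1 n2 where n: "V - {x0} = {n1, n2}" "n1 \<noteq> n2"
    using V(3) W(1) fin card_2_iff[of "V - {x0}"] by auto
  from W(2) have "W \<subseteq> {n1, n2}" by (simp add: n(1))
  then consider "W = {}" | m where "W = {m}" | "W = {n1, n2}" by (rule subset_doubleton_cases)
  then show ?thesis
  proof cases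
    case 1
    then show ?thesis using W(3) that(1) by (simp add: z_def neg_eq_iff_add_eq_0)
  next
    case (2 m)
    then obtain \<mu> where \<mu>: "0 < \<mu>" "- z = \<mu> *\<^sub>R m" using W(3) by (auto simp: pos_combination_singleton)
    have "z + \<mu> *\<^sub>R m = 0" using \<mu>(2) by (simp add: neg_eq_iff_add_eq_0)
    moreover have "m \<in> V" using 2 W(2) by auto
    ultimately show ?thesis using that(2) \<mu>(1) by (simp add: z_def)
  next
    case 3
    then have "W = V - {x0}" using n(1) by simp
    moreover have "pos_combination {a, b} z"
      using pos_combination_insert[OF _ _ pos(1) pos_combination_singletonI[OF pos(2)]] out(3)
      by (simp add: z_def)
    moreover have "span ({a, b} \<union> V) = UNIV"
      using span_aV span_mono[of "insert a V" "{a, b} \<union> V"] by auto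
    moreover have "{a, b} \<subseteq> S" "{a, b} \<inter> V = {}" using S_eq aV by auto
    ultimately show ?thesis
      using minimally_surrounds_relation_avoiding_vertex[OF assms(1,2) V(1,2) W(1)] W(3) by blast
  qed
qed

lemma minimally_surrounds_triangle_cases:
  fixes S :: "(real^3) set"
  assumes "finite S" "minimally_surrounds S"
    and V: "V \<subseteq> S" "pos_dependent V" "\<not> affine_dependent V" "card V = 3"
  shows "(\<exists>A B. critical_simplex 2 A \<and> critical_simplex 2 B \<and> card (A \<inter> B) = 1 \<and> S = A \<union> B)
    \<or> (\<exists>A B. critical_simplex 2 A \<and> critical_simplex 1 B \<and> A \<inter> B = {} \<and> S = A \<union> B)"
proof -
  have "card V = DIM(real^3)" using V(4) by simp
  then obtain a b \<alpha> \<beta> where out: "a \<notin> span V" "b \<notin> span V" "a \<noteq> b" and pos: "0 < \<alpha>" "0 < \<beta>"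
    and cross: "\<alpha> *\<^sub>R a + \<beta> *\<^sub>R b \<in> span V" and span_aV: "span (insert a V) = UNIV"
    and S_eq: "S = V \<union> {a, b}"
    by (rule minimally_surrounds_facet_circuit[OF assms(1,2) V(1-3)])
  have critV: "critical_simplex 2 V"
    using V finite_subset[OF V(1) assms(1)] by (simp add: critical_simplex_iff)
  have aV: "a \<notin> V" "b \<notin> V" using out(1,2) span_base by auto
  show ?thesis
  proof (rule minimally_surrounds_triangle_crossing[OF assms(1,2) V(1,2,4) out pos cross span_aV S_eq])
    assume "\<alpha> *\<^sub>R a + \<beta> *\<^sub>R b = 0"
    then have "critical_simplex 1 {a, b}" using out(3) pos by (intro critical_segmentI)
    moreover have "V \<inter> {a, b} = {}" using aV by auto
    ultimately show ?thesis using critV S_eq by blast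
  next
    fix m \<mu> assume m: "m \<in> V" "0 < \<mu>" "\<alpha> *\<^sub>R a + \<beta> *\<^sub>R b + \<mu> *\<^sub>R m = 0"
    have "m \<noteq> 0" using m(1) V(1) minimally_surrounds_zero_notin[OF assms(1,2)] by auto
    moreover have "a \<notin> span {m}" using out(1) span_mono[of "{m}" V] m(1) by auto
    moreover have "b \<noteq> m" using aV(2) m(1) by auto
    ultimately have "critical_simplex 2 {a, b, m}"
      using out(3) pos m(2,3) by (intro critical_triangleI)
    moreover have "V \<inter> {a, b, m} = {m}" using aV m(1) by auto
    moreover have "S = V \<union> {a, b, m}" using S_eq m(1) by auto
    ultimately show ?thesis using critV by (intro disjI1 exI[of _ V] exI[of _ "{a, b, m}"]) simp
  qed
qed

lemma minimally_surrounds_segment_cases: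
  fixes S :: "(real^3) set"
  assumes "finite S" "minimally_surrounds S"
    and segments: "\<forall>s\<in>S. \<exists>V\<subseteq>S. s \<in> V \<and> critical_simplex 1 V"
  shows "\<exists>A B C. critical_simplex 1 A \<and> critical_simplex 1 B \<and> critical_simplex 1 C
    \<and> A \<inter> B = {} \<and> A \<inter> C = {} \<and> B \<inter> C = {} \<and> S = A \<union> B \<union> C"
proof -
  note S = minimally_surroundsD[OF assms(1,2)]
  obtain B where B: "B \<subseteq> S" "independent B" "S \<subseteq> span B" "card B = dim S"
    by (rule basis_exists)
  have span_B: "span B = UNIV" using B(3) S(1) span_minimal[OF _ subspace_span] by blast
  have "dim S = DIM(real^3)" using S(1) by (metis dim_UNIV dim_span)
  then have "card B = 3" using B(4) by simp
  then obtain b1 b2 b3 where b: "B = {b1, b2, b3}" "b1 \<noteq> b2" "b2 \<noteq> b3" "b1 \<noteq> b3"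
    by (auto simp: card_3_iff)
  have "\<forall>b\<in>B. \<exists>V. V \<subseteq> S \<and> b \<in> V \<and> critical_simplex 1 V"
    using segments B(1) by blast
  from bchoice[OF this] obtain P where P: "\<forall>b\<in>B. P b \<subseteq> S \<and> b \<in> P b \<and> critical_simplex 1 (P b)"
    by blast
  have seg: "finite (P b)" "pos_dependent (P b)" if "b \<in> B" for b
    using P that by (auto simp: critical_simplex_iff)
  have disj: "P b \<inter> P b' = {}" if "b \<in> B" "b' \<in> B" "b \<noteq> b'" for b b'
  proof -
    have "P b \<subseteq> span {b}" "P b' \<subseteq> span {b'}"
      using P that(1,2) by (intro critical_segment_subset_span; simp)+
    then have "P b \<inter> P b' \<subseteq> {0}" using span_singleton_inter_independent[OF B(2) that] by blast
    moreover have "0 \<notin> P b" using P that(1) minimally_surrounds_zero_notin[OF assms(1,2)] by blast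
    ultimately show ?thesis by blast
  qed
  have inB: "b1 \<in> B" "b2 \<in> B" "b3 \<in> B" using b(1) by auto
  have pc12: "pos_combination (P b1 \<union> P b2) (0 + 0)"
    using seg inB disj[of b1 b2] b(2) by (intro pos_combination_Un) auto
  have "pos_combination (P b1 \<union> P b2 \<union> P b3) (0 + 0 + 0)"
    by (rule pos_combination_Un[OF _ _ _ pc12])
      (use seg inB disj[of b1 b3] disj[of b2 b3] b(3,4) in auto)
  then have "pos_dependent (P b1 \<union> P b2 \<union> P b3)" by simp
  moreover have "B \<subseteq> P b1 \<union> P b2 \<union> P b3" using P b(1) by auto
  then have "span (P b1 \<union> P b2 \<union> P b3) = UNIV" using span_B span_mono by blast
  moreover have "P b1 \<union> P b2 \<union> P b3 \<subseteq> S" using P inB by auto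
  ultimately have "P b1 \<union> P b2 \<union> P b3 = S"
    by (intro minimally_surrounds_subset_eq[OF assms(1,2)])
  moreover have "P b1 \<inter> P b2 = {}" "P b1 \<inter> P b3 = {}" "P b2 \<inter> P b3 = {}"
    using disj inB b(2-4) by auto
  ultimately show ?thesis
    using P inB by (intro exI[of _ "P b1"] exI[of _ "P b2"] exI[of _ "P b3"]) simp
qed

lemma minimally_surrounds_circuit_cases:
  fixes S :: "(real^3) set"
  assumes "finite S" "minimally_surrounds S"
  obtains V where "V \<subseteq> S" "pos_dependent V" "\<not> affine_dependent V" "card V = 4"
    | V where "V \<subseteq> S" "pos_dependent V" "\<not> affine_dependent V" "card V = 3"
    | "\<forall>s\<in>S. \<exists>V\<subseteq>S. s \<in> V \<and> critical_simplex 1 V"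
proof (cases "\<exists>V\<subseteq>S. pos_dependent V \<and> \<not> affine_dependent V \<and> card V \<in> {3, 4}")
  case True
  then obtain V where V: "V \<subseteq> S" "pos_dependent V" "\<not> affine_dependent V" "card V \<in> {3, 4}"
    by blast
  show ?thesis
  proof (cases "card V = 4")
    case True
    then show ?thesis by (rule that(1)[OF V(1-3)])
  next
    case False
    then have "card V = 3" using V(4) by simp
    then show ?thesis by (rule that(2)[OF V(1-3)])
  qed
next
  case False
  have "\<exists>V\<subseteq>S. s \<in> V \<and> critical_simplex 1 V" if s: "s \<in> S" for s
  proof -
    obtain V where V: "V \<subseteq> S" "s \<in> V" "pos_dependent V" "\<not> affine_dependent V"
      "2 \<le> card V" "card V \<le> DIM(real^3) + 1"
      by (rule minimally_surrounds_obtain_circuit[OF assms s])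
    have "card V \<notin> {3, 4}" using False V(1,3,4) by blast
    then have "critical_simplex 1 V" unfolding critical_segment_iff using V(3,5,6) by simp
    then show ?thesis using V(1,2) by blast
  qed
  then show ?thesis using that(3) by blast
qed

theorem lemma20:
  fixes S :: "(real^3) set"
  assumes "finite S" and "minimally_surrounds S"
  shows "critical_simplex 3 S
    \<or> (\<exists>A B. critical_simplex 2 A \<and> critical_simplex 2 B \<and> card (A \<inter> B) = 1 \<and> S = A \<union> B)
    \<or> (\<exists>A B. critical_simplex 2 A \<and> critical_simplex 1 B \<and> A \<inter> B = {} \<and> S = A \<union> B)
    \<or> (\<exists>A B C. critical_simplex 1 A \<and> critical_simplex 1 B \<and> critical_simplex 1 C
         \<and> A \<inter> B = {} \<and> A \<inter> C = {} \<and> B \<inter> C = {} \<and> S = A \<union> B \<union> C)"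
  using assms
proof (cases rule: minimally_surrounds_circuit_cases)
  case (1 V)
  then have "V = S" using minimally_surrounds_full_circuit[OF assms] by simp
  then have "critical_simplex 3 S" using 1 assms(1) by (simp add: critical_simplex_iff)
  then show ?thesis by (rule disjI1)
next
  case (2 V)
  from minimally_surrounds_triangle_cases[OF assms 2]
  show ?thesis by (elim disjE) simp_all
next
  case 3
  show ?thesis by (intro disjI2) (rule minimally_surrounds_segment_cases[OF assms 3])
qed

end
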